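(* Let $\theta$ be a $p$-dimensional functional of $d$-dimensional distribution functions, $m\in\mathbb N$ the training sample size, $T>0$ with $Tm\in\mathbb N$, and $\alpha\in(0,1)$. Assume the following alternative setting: the change occurs at position $\lfloor mc\rfloor$ for some $c\in(1,T+1)$; there are strictly stationary $\mathbb R^d$-valued processes $\{Z_t(1)\}_{t\in\mathbb Z}$, $\{Z_t(2)\}_{t\in\mathbb Z}$ with marginal distribution functions $F^{(1)},F^{(2)}$ such that $\theta(F^{(1)})\ne\theta(F^{(2)})$, and for each $m$ (the observations forming a triangular array $X_t=X_{m,t}$) $$(X_1,\dots,X_{\lfloor mc\rfloor})\overset{\mathcal D}{=}(Z_1(1),\dots,Z_{\lfloor mc\rfloor}(1)),\qquad (X_{\lfloor mc\rfloor+1},\dots,X_{m(T+1)})\overset{\mathcal D}{=}(Z_{\lfloor mc\rfloor+1}(2),\dots,Z_{m(T+1)}(2));$$ there exist standard $p$-dimensional Brownian motions $W_1,W_2$ such that jointly $$\Big(\big\{\tfrac1{\sqrt m}\textstyle\sum_{t=1}^{\lfloor ms\rfloor}\mathcal{IF}(Z_t(1),F^{(1)},\theta)\big\}_{s\in[0,c]},\ \big\{\tfrac1{\sqrt m}\sum_{t=\lfloor mc\rfloor+1}^{\lfloor ms\rfloor}\mathcal{IF}(Z_t(2),F^{(2)},\theta)\big\}_{s\in[c,T+1]}\Big)\Rightarrow\Big(\{\Sigma_{F^{(1)}}^{1/2}W_1(s)\}_{s\in[0,c]},\ \{\Sigma_{F^{(2)}}^{1/2}(W_2(s)-W_2(c))\}_{s\in[c,T+1]}\Big),$$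 where $\Sigma_{F^{(\ell)}}=\sum_{t\in\mathbb Z}\mathrm{Cov}(\mathcal{IF}(Z_0(\ell),F^{(\ell)},\theta),\mathcal{IF}(Z_t(\ell),F^{(\ell)},\theta))$, $\ell=1,2$, are positive definite; and both phases satisfy the remainder condition, i.e. for $\ell=1,2$ the remainders $R^{(\ell)}_{i,j}=\theta(\hat F_i^j)-\theta(F^{(\ell)})-\frac1{j-i+1}\sum_{t=i}^j\mathcal{IF}(X_t,F^{(\ell)},\theta)$, computed from observations of phase $\ell$, satisfy $\sup_{i<j}(j-i+1)|R^{(\ell)}_{i,j}|=o_{\mathbb P}(n^{1/2})$ with $n$ the length of the phase. Let $\hat\Sigma_m$ be a consistent estimator of $\Sigma_{F^{(1)}}$ based on $X_1,\dots,X_m$, and let $w_\alpha:[0,T]\to\mathbb R^+$ be an increasing function satisfying $$\mathbb P\Big(\sup_{t\in[1,T+1]}\sup_{s\in[1,t]}\frac{B(s,t)^\top B(s,t)}{w_\alpha(t-1)}>1\Big)=\alpha,$$ where $B(s,t)=tW(s)-sW(t)$ for a standard $p$-dimensional Brownian motion $W$. Then $$\lim_{m\to\infty}\mathbb P\Big(\max_{1\le k\le Tm}\frac{\hat D_m(k)}{w_\alpha(k/m)}>1\Big)=1.$$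
   Context: The influence function is $\mathcal{IF}(x,F,\theta)=\lim_{\varepsilon\searrow0}\varepsilon^{-1}\big(\theta((1-\varepsilon)F+\varepsilon\delta_x)-\theta(F)\big)$ with $\delta_x(z)=I\{x\le z\}$ (componentwise). For $i\le j$, $\hat F_i^j(z)=\frac1{j-i+1}\sum_{t=i}^jI\{X_t\le z\}$ and $\hat\theta_i^j=\theta(\hat F_i^j)$; $\hat\theta_z^u=0$ if $z>u$. The detector is $\hat D_m(k)=m^{-3}\max_{j=0}^{k-1}(m+j)^2(k-j)^2(\hat\theta_1^{m+j}-\hat\theta_{m+j+1}^{m+k})^\top\hat\Sigma_m^{-1}(\hat\theta_1^{m+j}-\hat\theta_{m+j+1}^{m+k})$. *)

theory Defs
  imports "HOL-Probability.Probability"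
begin

text \<open>Distribution functions on R^d are represented as functions real^'d => real;
  the order on real^'d is the componentwise one (library instance).\<close>

definition dirac_cdf :: "real^'d \<Rightarrow> (real^'d \<Rightarrow> real)" where
  "dirac_cdf x = (\<lambda>z. if x \<le> z then 1 else 0)"

definition infl_fun ::
  "real^'d \<Rightarrow> (real^'d \<Rightarrow> real) \<Rightarrow> ((real^'d \<Rightarrow> real) \<Rightarrow> real^'p) \<Rightarrow> real^'p" where
  "infl_fun x F \<theta> =
     Lim (at_right 0)
       (\<lambda>\<epsilon>::real. (1/\<epsilon>) *\<^sub>R
          (\<theta> (\<lambda>z. (1 - \<epsilon>) * F z + \<epsilon> * dirac_cdf x z) - \<theta> F))"

definition emp_cdf :: "(nat \<Rightarrow> real^'d) \<Rightarrow> nat \<Rightarrow> nat \<Rightarrow> (real^'d \<Rightarrow> real)" where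
  "emp_cdf x i j = (\<lambda>z. (1 / real (j - i + 1)) * (\<Sum>t=i..j. dirac_cdf (x t) z))"

definition theta_hat ::
  "((real^'d \<Rightarrow> real) \<Rightarrow> real^'p) \<Rightarrow> (nat \<Rightarrow> real^'d) \<Rightarrow> nat \<Rightarrow> nat \<Rightarrow> real^'p" where
  "theta_hat \<theta> x i j = (if i \<le> j then \<theta> (emp_cdf x i j) else 0)"

definition detector ::
  "((real^'d \<Rightarrow> real) \<Rightarrow> real^'p) \<Rightarrow> (nat \<Rightarrow> real^'d) \<Rightarrow> real^'p^'p \<Rightarrow> nat \<Rightarrow> nat \<Rightarrow> real" where
  "detector \<theta> x Sig m k =
     (1 / real m ^ 3) *
     Max ((\<lambda>j. (real (m + j))\<^sup>2 * (real (k - j))\<^sup>2 *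
            ((theta_hat \<theta> x 1 (m + j) - theta_hat \<theta> x (m + j + 1) (m + k)) \<bullet>
             (matrix_inv Sig *v (theta_hat \<theta> x 1 (m + j) - theta_hat \<theta> x (m + j + 1) (m + k)))))
          ` {0..<k})"

definition pos_def_mat :: "real^'p^'p \<Rightarrow> bool" where
  "pos_def_mat A \<longleftrightarrow> transpose A = A \<and> (\<forall>v. v \<noteq> 0 \<longrightarrow> v \<bullet> (A *v v) > 0)"

definition psd_mat :: "real^'p^'p \<Rightarrow> bool" where
  "psd_mat A \<longleftrightarrow> transpose A = A \<and> (\<forall>v. v \<bullet> (A *v v) \<ge> 0)"

definition mat_sqrt :: "real^'p^'p \<Rightarrow> real^'p^'p" where
  "mat_sqrt A = (THE S. psd_mat S \<and> S ** S = A)"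

definition cdf_of :: "'a measure \<Rightarrow> ('a \<Rightarrow> real^'d) \<Rightarrow> (real^'d \<Rightarrow> real)" where
  "cdf_of P Y = (\<lambda>z. measure P {\<omega> \<in> space P. Y \<omega> \<le> z})"

definition cov_mat :: "'a measure \<Rightarrow> ('a \<Rightarrow> real^'p) \<Rightarrow> ('a \<Rightarrow> real^'p) \<Rightarrow> real^'p^'p" where
  "cov_mat P U V =
     (\<chi> i j. integral\<^sup>L P (\<lambda>\<omega>. (U \<omega> $ i - integral\<^sup>L P (\<lambda>\<eta>. U \<eta> $ i)) *
                                  (V \<omega> $ j - integral\<^sup>L P (\<lambda>\<eta>. V \<eta> $ j))))"

definition strictly_stationary :: "'a measure \<Rightarrow> (int \<Rightarrow> 'a \<Rightarrow> real^'d) \<Rightarrow> bool" where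
  "strictly_stationary P Z \<longleftrightarrow>
     (\<forall>t. Z t \<in> borel_measurable P) \<and>
     (\<forall>(h::int) (n::nat).
        distr P (PiM {..<n} (\<lambda>_. borel)) (\<lambda>\<omega>. \<lambda>i\<in>{..<n}. Z (h + int i) \<omega>) =
        distr P (PiM {..<n} (\<lambda>_. borel)) (\<lambda>\<omega>. \<lambda>i\<in>{..<n}. Z (int i) \<omega>))"

definition std_BM :: "'a measure \<Rightarrow> (real \<Rightarrow> 'a \<Rightarrow> real^'p) \<Rightarrow> bool" where
  "std_BM N W \<longleftrightarrow>
     prob_space N \<and>
     (\<forall>t. W t \<in> borel_measurable N) \<and>
     (\<forall>\<omega>\<in>space N. W 0 \<omega> = 0) \<and>
     (\<forall>\<omega>\<in>space N. continuous_on {0..} (\<lambda>t. W t \<omega>)) \<and>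
     (\<forall>(ts::nat \<Rightarrow> real) (n::nat). 0 \<le> ts 0 \<longrightarrow> strict_mono ts \<longrightarrow>
        prob_space.indep_vars N (\<lambda>_. borel) (\<lambda>i \<omega>. W (ts (Suc i)) \<omega> - W (ts i) \<omega>) {..<n}) \<and>
     (\<forall>s t. 0 \<le> s \<longrightarrow> s < t \<longrightarrow>
        distributed N lborel (\<lambda>\<omega>. W t \<omega> - W s \<omega>)
          (\<lambda>x. ennreal (\<Prod>i\<in>UNIV. normal_density 0 (sqrt (t - s)) (x $ i))))"

definition outer_exp :: "'a measure \<Rightarrow> ('a \<Rightarrow> real) \<Rightarrow> real" where
  "outer_exp P f = Inf {integral\<^sup>L P h | h. integrable P h \<and> (\<forall>\<omega>\<in>space P. f \<omega> \<le> h \<omega>)}"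

definition sup_cont :: "real set \<Rightarrow> real set \<Rightarrow> (((real \<Rightarrow> real^'p) \<times> (real \<Rightarrow> real^'p)) \<Rightarrow> real) \<Rightarrow> bool" where
  "sup_cont A B g \<longleftrightarrow>
     (\<forall>x. \<forall>e>0. \<exists>\<delta>>0. \<forall>y.
        (\<forall>s\<in>A. dist (fst x s) (fst y s) < \<delta>) \<and> (\<forall>s\<in>B. dist (snd x s) (snd y s) < \<delta>)
        \<longrightarrow> \<bar>g x - g y\<bar> < e)"

text \<open>Weak convergence (Hoffmann-Joergensen sense, sup-norm) of random pairs of paths
  Y_m (on P) to a limit Y (on N) along the filter F.\<close>
definition weak_conv_paths ::
  "nat filter \<Rightarrow> real set \<Rightarrow> real set \<Rightarrow> 'a measure \<Rightarrow> (nat \<Rightarrow> 'a \<Rightarrow> (real \<Rightarrow> real^'p) \<times> (real \<Rightarrow> real^'p))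
     \<Rightarrow> 'b measure \<Rightarrow> ('b \<Rightarrow> (real \<Rightarrow> real^'p) \<times> (real \<Rightarrow> real^'p)) \<Rightarrow> bool" where
  "weak_conv_paths F A B P Y N Yl \<longleftrightarrow>
     (\<forall>g. bounded (range g) \<and> sup_cont A B g \<longrightarrow>
        ((\<lambda>m. outer_exp P (\<lambda>\<omega>. g (Y m \<omega>))) \<longlongrightarrow> integral\<^sup>L N (\<lambda>\<omega>. g (Yl \<omega>))) F)"

end

(* Fix e = |theta(F1) - theta(F2)| / 8.  Outside an event of vanishing probability the
   remainder condition holds at level e on both phases, the means of the influence functions
   over the two phases are at most e (their laws are those of the partial-sum processes at
   s = c and s = T+1, which are tight by weak convergence, while the phase lengths grow like m),
   and the estimated covariance is so close to the positive definite Sigma1 that the quadratic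
   form of its inverse is at least kappa |v|^2.  On that event the pre- and post-change
   estimates are within 2e of theta(F1) and theta(F2), and evaluating the detector at the last
   time k = Tm with split point j = floor(mc) - m gives
   D(Tm) >= kappa (T + 1 - c)^2 (4e)^2 m, which exceeds w(T) > 0 for large m. *)

theory Submission
  imports Defs
begin

section \<open>Measurability of matrix expressions\<close>

lemma borel_measurable_vec_nth [measurable]:
  "(\<lambda>v::'b::real_normed_vector^'n. v $ i) \<in> borel_measurable borel"
  by (intro borel_measurable_continuous_onI linear_continuous_on bounded_linear_vec_nth)

lemma borel_measurable_vec_lambda [measurable]:
  fixes g :: "'n::finite \<Rightarrow> 'a \<Rightarrow> 'b::euclidean_space"
  assumes "\<And>k. g k \<in> borel_measurable M"
  shows "(\<lambda>\<omega>. (\<chi> k. g k \<omega>) :: 'b^'n) \<in> borel_measurable M"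
proof (subst borel_measurable_euclidean_space, intro ballI)
  fix i :: "'b^'n" assume "i \<in> Basis"
  then obtain k u where "i = axis k u" "u \<in> Basis" unfolding Basis_vec_def by auto
  then show "(\<lambda>\<omega>. (\<chi> k. g k \<omega>) \<bullet> i) \<in> borel_measurable M"
    using assms by (simp add: inner_axis)
qed

lemma borel_measurable_det [measurable]:
  fixes f :: "'a \<Rightarrow> real^'n^'n"
  assumes [measurable]: "f \<in> borel_measurable M"
  shows "(\<lambda>x. det (f x)) \<in> borel_measurable M"
  unfolding det_def by measurable

lemma borel_measurable_matrix_vector_mult [measurable (raw)]:
  fixes A :: "real^'n^'m"
  assumes "f \<in> borel_measurable M"
  shows "(\<lambda>\<omega>. A *v f \<omega>) \<in> borel_measurable M"
  using borel_measurable_continuous_on[OF linear_continuous_on[OF matrix_vector_mul_bounded_linear] assms] .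

lemma matrix_inv_not_invertible:
  fixes E :: "real^'n^'n"
  assumes "\<not> invertible E"
  shows "matrix_inv E = matrix_inv (0::real^'n^'n)"
proof -
  have "(mat 1::real^'n^'n) $ undefined $ undefined \<noteq> 0"
    by (simp add: mat_def)
  then have "\<not> invertible (0::real^'n^'n)"
    unfolding invertible_def by auto
  then have "(\<lambda>A'::real^'n^'n. E ** A' = mat 1 \<and> A' ** E = mat 1) =
      (\<lambda>A'. (0::real^'n^'n) ** A' = mat 1 \<and> A' ** 0 = mat 1)"
    using assms unfolding invertible_def by blast
  then show ?thesis
    unfolding matrix_inv_def by simp
qed

lemma matrix_inv_mult_vector_cramer:
  fixes E :: "real^'n^'n"
  assumes "det E \<noteq> 0"
  shows "matrix_inv E *v v = (\<chi> k. det (\<chi> i j. if j = k then v $ i else E $ i $ j) / det E)"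
proof -
  have "E ** matrix_inv E = mat 1"
    using assms invertible_det_nz unfolding invertible_def matrix_inv_def
    by (metis (mono_tags, lifting) someI_ex)
  then have "E *v (matrix_inv E *v v) = v"
    by (simp add: matrix_vector_mul_assoc)
  then show ?thesis
    using cramer[OF assms] by blast
qed

text \<open>By Cramer's rule the inverse is a quotient of determinants on the invertible matrices,
  and \<^const>\<open>matrix_inv\<close> is constant on the singular ones.\<close>
lemma borel_measurable_quadratic_form_matrix_inv [measurable]:
  fixes E :: "'a \<Rightarrow> real^'n^'n" and v :: "'a \<Rightarrow> real^'n"
  assumes [measurable]: "E \<in> borel_measurable M" "v \<in> borel_measurable M"
  shows "(\<lambda>\<omega>. v \<omega> \<bullet> (matrix_inv (E \<omega>) *v v \<omega>)) \<in> borel_measurable M"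
proof -
  define C where "C \<omega> k = ((\<chi> i j. if j = k then v \<omega> $ i else E \<omega> $ i $ j) :: real^'n^'n)" for \<omega> k
  have C [measurable]: "(\<lambda>\<omega>. C \<omega> k) \<in> borel_measurable M" for k
    unfolding C_def by (intro borel_measurable_vec_lambda) measurable
  have "v \<omega> \<bullet> (matrix_inv (E \<omega>) *v v \<omega>) =
      (if det (E \<omega>) \<noteq> 0 then v \<omega> \<bullet> (\<chi> k. det (C \<omega> k) / det (E \<omega>))
       else v \<omega> \<bullet> (matrix_inv 0 *v v \<omega>))" for \<omega>
    using matrix_inv_not_invertible[of "E \<omega>"] invertible_det_nz[of "E \<omega>"]
    by (simp add: matrix_inv_mult_vector_cramer C_def)
  moreover have "{\<omega> \<in> space M. det (E \<omega>) \<noteq> 0} \<in> sets M"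
    by measurable
  ultimately show ?thesis
    by (simp only:) (intro measurable_If borel_measurable_inner borel_measurable_vec_lambda
        borel_measurable_divide borel_measurable_det C; measurable)
qed

section \<open>Quadratic forms near a positive definite matrix\<close>

lemma norm_matrix_vector_mult_le:
  fixes B :: "real^'n^'m"
  shows "norm (B *v u) \<le> real CARD('m) * real CARD('n) * norm B * norm u"
proof -
  have "\<bar>B $ i $ j\<bar> \<le> norm B" for i j
    using component_le_norm_cart[of "B $ i" j] Finite_Cartesian_Product.norm_nth_le[of B i] by simp
  then have "onorm ((*v) B) \<le> real CARD('m) * real CARD('n) * norm B"
    by (rule onorm_le_matrix_component)
  moreover have "norm (B *v u) \<le> onorm ((*v) B) * norm u"
    by (rule onorm[OF matrix_vector_mul_bounded_linear])
  ultimately show ?thesis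
    by (meson mult_right_mono norm_ge_zero order_trans)
qed

lemma pos_def_mat_coercive:
  fixes A :: "real^'n^'n"
  assumes "pos_def_mat A"
  obtains l where "l > 0" "\<And>u. l * (norm u)\<^sup>2 \<le> u \<bullet> (A *v u)"
proof -
  let ?q = "\<lambda>u. u \<bullet> (A *v u)"
  have "continuous_on (sphere 0 1) ?q"
    by (intro continuous_intros linear_continuous_on matrix_vector_mul_bounded_linear)
  moreover have "axis undefined 1 \<in> sphere (0::real^'n) 1"
    by (simp add: norm_axis_1)
  then have "sphere (0::real^'n) 1 \<noteq> {}"
    by blast
  ultimately obtain u0 where u0: "u0 \<in> sphere 0 1" "\<And>u. u \<in> sphere 0 1 \<Longrightarrow> ?q u0 \<le> ?q u"
    using continuous_attains_inf[of "sphere 0 1" ?q] by auto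
  have "u0 \<noteq> 0"
    using u0(1) by auto
  then have "?q u0 > 0"
    using assms unfolding pos_def_mat_def by blast
  moreover have "?q u0 * (norm u)\<^sup>2 \<le> ?q u" for u
  proof (cases "u = 0")
    case False
    have "?q u0 \<le> ?q ((1 / norm u) *\<^sub>R u)"
      using False by (intro u0(2)) simp
    also have "\<dots> = ?q u / (norm u)\<^sup>2"
      by (simp add: matrix_vector_mult_scaleR power2_eq_square)
    finally show ?thesis
      using False by (simp add: pos_le_divide_eq)
  qed simp
  ultimately show ?thesis
    using that by blast
qed

lemma coercive_perturbation:
  fixes A E :: "real^'n^'n"
  assumes coercive: "\<And>u. l * (norm u)\<^sup>2 \<le> u \<bullet> (A *v u)"
    and close: "real CARD('n) * real CARD('n) * norm (E - A) \<le> l / 2"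
  shows "l / 2 * (norm u)\<^sup>2 \<le> u \<bullet> (E *v u)"
proof -
  have "\<bar>u \<bullet> ((E - A) *v u)\<bar> \<le> norm u * norm ((E - A) *v u)"
    by (rule Cauchy_Schwarz_ineq2)
  also have "\<dots> \<le> norm u * (real CARD('n) * real CARD('n) * norm (E - A) * norm u)"
    by (intro mult_left_mono norm_matrix_vector_mult_le) simp
  also have "\<dots> \<le> norm u * (l / 2 * norm u)"
    using close by (intro mult_left_mono mult_right_mono) auto
  finally have "\<bar>u \<bullet> ((E - A) *v u)\<bar> \<le> l / 2 * (norm u)\<^sup>2"
    by (simp add: power2_eq_square algebra_simps)
  moreover have "u \<bullet> (E *v u) = u \<bullet> (A *v u) + u \<bullet> ((E - A) *v u)"
    by (simp add: matrix_vector_mult_diff_rdistrib inner_diff_right)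
  ultimately show ?thesis
    using coercive[of u] by linarith
qed

lemma coercive_quadratic_form_matrix_inv:
  fixes E :: "real^'n^'n"
  assumes "k > 0" and coercive: "\<And>u. k * (norm u)\<^sup>2 \<le> u \<bullet> (E *v u)"
    and bound: "real CARD('n) * real CARD('n) * norm E \<le> D"
  shows "k * (norm v)\<^sup>2 \<le> D\<^sup>2 * (v \<bullet> (matrix_inv E *v v))"
proof -
  have "inj ((*v) E)"
  proof (rule injI)
    fix x y assume "E *v x = E *v y"
    then have "k * (norm (x - y))\<^sup>2 \<le> 0"
      using coercive[of "x - y"] by (simp add: matrix_vector_mult_diff_distrib)
    then show "x = y"
      using \<open>k > 0\<close> by (simp add: mult_le_0_iff)
  qed
  then have "invertible E"
    using matrix_left_invertible_injective invertible_left_inverse by blast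
  then have "E ** matrix_inv E = mat 1"
    unfolding invertible_def matrix_inv_def by (rule someI_ex[THEN conjunct1])
  define x where "x = matrix_inv E *v v"
  have Ex: "E *v x = v"
    unfolding x_def by (simp add: matrix_vector_mul_assoc \<open>E ** matrix_inv E = mat 1\<close>)
  have qx: "k * (norm x)\<^sup>2 \<le> v \<bullet> x"
    using coercive[of x] Ex by (simp add: inner_commute)
  have "norm v \<le> D * norm x"
    using norm_matrix_vector_mult_le[of E x] bound Ex
    by (metis mult_right_mono norm_ge_zero order_trans)
  then have "(norm v)\<^sup>2 \<le> D\<^sup>2 * (norm x)\<^sup>2"
    by (metis norm_ge_zero power_mono power_mult_distrib)
  then have "k * (norm v)\<^sup>2 \<le> D\<^sup>2 * (k * (norm x)\<^sup>2)"
    using \<open>k > 0\<close> by (simp add: algebra_simps)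
  also have "\<dots> \<le> D\<^sup>2 * (v \<bullet> x)"
    using qx by (intro mult_left_mono) auto
  finally show ?thesis
    unfolding x_def .
qed

lemma pos_def_mat_inverse_coercive_near:
  fixes A :: "real^'n^'n"
  assumes "pos_def_mat A"
  obtains \<eta> \<kappa> where "\<eta> > 0" "\<kappa> > 0"
    "\<And>E v. norm (E - A) \<le> \<eta> \<Longrightarrow> \<kappa> * (norm v)\<^sup>2 \<le> v \<bullet> (matrix_inv E *v v)"
proof -
  obtain l where "l > 0" and coercive: "\<And>u. l * (norm u)\<^sup>2 \<le> u \<bullet> (A *v u)"
    using pos_def_mat_coercive[OF assms] by blast
  define C where "C = real CARD('n) * real CARD('n)"
  define D where "D = C * (norm A + 1)"
  have "C > 0" "D > 0"
    unfolding C_def D_def by (simp_all add: add_nonneg_pos)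
  have "(l / 2 / D\<^sup>2) * (norm v)\<^sup>2 \<le> v \<bullet> (matrix_inv E *v v)"
    if close: "norm (E - A) \<le> min 1 (l / (2 * C))" for E and v :: "real^'n"
  proof -
    have "C * norm (E - A) \<le> l / 2"
      using close \<open>C > 0\<close> by (simp add: pos_le_divide_eq mult_ac)
    then have "l / 2 * (norm u)\<^sup>2 \<le> u \<bullet> (E *v u)" for u
      using coercive_perturbation[OF coercive] unfolding C_def by blast
    moreover have "C * norm E \<le> D"
      using norm_triangle_ineq[of A "E - A"] close \<open>C > 0\<close> unfolding D_def by simp
    ultimately have "l / 2 * (norm v)\<^sup>2 \<le> D\<^sup>2 * (v \<bullet> (matrix_inv E *v v))"
      using \<open>l > 0\<close> unfolding C_def by (intro coercive_quadratic_form_matrix_inv) auto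
    then show ?thesis
      using \<open>D > 0\<close> by (simp add: field_simps)
  qed
  then show ?thesis
    using that[of "min 1 (l / (2 * C))" "l / 2 / D\<^sup>2"] \<open>l > 0\<close> \<open>C > 0\<close> \<open>D > 0\<close> by simp
qed

section \<open>Deterministic bounds for the detector\<close>

lemma norm_le_of_remainder_and_sum_bounds:
  fixes u S :: "'a::real_normed_vector" and n e :: real
  assumes "1 \<le> n" "0 \<le> e"
    and remainder: "n * norm (u - (1 / n) *\<^sub>R S) \<le> e * sqrt n"
    and sum: "norm S \<le> e * n"
  shows "norm u \<le> 2 * e"
proof -
  have "e * sqrt n \<le> e * n"
    using assms(1,2) mult_right_mono[of 1 n n]
    by (intro mult_left_mono) (auto simp: real_sqrt_le_iff' power2_eq_square)
  then have "n * norm (u - (1 / n) *\<^sub>R S) \<le> n * e"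
    using remainder by (simp add: mult.commute)
  then have "norm (u - (1 / n) *\<^sub>R S) \<le> e"
    using assms(1) by (simp add: mult_le_cancel_left_pos)
  moreover have "norm ((1 / n) *\<^sub>R S) \<le> e"
    using sum assms(1) by (simp add: pos_divide_le_eq mult.commute)
  ultimately show ?thesis
    using norm_triangle_ineq[of "u - (1 / n) *\<^sub>R S" "(1 / n) *\<^sub>R S"] by simp
qed

lemma detector_lower_bound:
  assumes "0 < m" "m \<le> a" "a < b" "0 \<le> \<kappa>"
    and quad: "\<And>v. \<kappa> * (norm v)\<^sup>2 \<le> v \<bullet> (matrix_inv Sig *v v)"
    and phase1: "norm (theta_hat \<theta> x 1 a - \<theta>1) \<le> \<delta>"
    and phase2: "norm (theta_hat \<theta> x (a + 1) b - \<theta>2) \<le> \<delta>"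
    and separated: "2 * \<delta> \<le> norm (\<theta>1 - \<theta>2)"
  shows "\<kappa> * (real a)\<^sup>2 * (real (b - a))\<^sup>2 * (norm (\<theta>1 - \<theta>2) - 2 * \<delta>)\<^sup>2 / real m ^ 3
    \<le> detector \<theta> x Sig m (b - m)"
proof -
  define D where "D = theta_hat \<theta> x 1 a - theta_hat \<theta> x (a + 1) b"
  have "\<theta>1 - \<theta>2 = D - (theta_hat \<theta> x 1 a - \<theta>1) + (theta_hat \<theta> x (a + 1) b - \<theta>2)"
    unfolding D_def by (simp add: algebra_simps)
  then have "norm (\<theta>1 - \<theta>2) \<le> norm D + \<delta> + \<delta>"
    using phase1 phase2 norm_triangle_ineq norm_triangle_ineq4
    by (smt (verit, best))
  then have "(norm (\<theta>1 - \<theta>2) - 2 * \<delta>)\<^sup>2 \<le> (norm D)\<^sup>2"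
    using separated by (intro power_mono) auto
  then have "\<kappa> * (norm (\<theta>1 - \<theta>2) - 2 * \<delta>)\<^sup>2 \<le> D \<bullet> (matrix_inv Sig *v D)"
    using quad[of D] \<open>0 \<le> \<kappa>\<close> by (meson mult_left_mono order_trans)
  then have "(real a)\<^sup>2 * (real (b - a))\<^sup>2 * (\<kappa> * (norm (\<theta>1 - \<theta>2) - 2 * \<delta>)\<^sup>2)
      \<le> (real a)\<^sup>2 * (real (b - a))\<^sup>2 * (D \<bullet> (matrix_inv Sig *v D))"
    by (intro mult_left_mono) auto
  also have "\<dots> \<le> Max ((\<lambda>j. (real (m + j))\<^sup>2 * (real (b - m - j))\<^sup>2 *
      ((theta_hat \<theta> x 1 (m + j) - theta_hat \<theta> x (m + j + 1) (m + (b - m))) \<bullet>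
       (matrix_inv Sig *v (theta_hat \<theta> x 1 (m + j) - theta_hat \<theta> x (m + j + 1) (m + (b - m))))))
      ` {0..<b - m})"
    using assms(2,3) unfolding D_def by (intro Max_ge image_eqI[where x = "a - m"]) auto
  finally show ?thesis
    using \<open>0 < m\<close> unfolding detector_def by (simp add: field_simps)
qed

lemma square_scaling_le_div_cube:
  fixes m a b q k D :: real
  assumes "0 < m" "m \<le> a" "q * m \<le> b" "0 \<le> q" "0 \<le> k"
  shows "k * q\<^sup>2 * D\<^sup>2 * m \<le> k * a\<^sup>2 * b\<^sup>2 * D\<^sup>2 / m ^ 3"
proof -
  have "m\<^sup>2 * (q * m)\<^sup>2 \<le> a\<^sup>2 * b\<^sup>2"
    using assms by (intro mult_mono power_mono) auto
  then have "k * D\<^sup>2 * (m\<^sup>2 * (q * m)\<^sup>2) \<le> k * D\<^sup>2 * (a\<^sup>2 * b\<^sup>2)"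
    using assms by (intro mult_left_mono) auto
  then show ?thesis
    using assms(1) by (simp add: pos_le_divide_eq power2_eq_square power3_eq_cube algebra_simps)
qed

section \<open>Tails of weakly convergent partial-sum processes\<close>

lemma (in prob_space) prob_le_outer_exp:
  assumes "E \<in> events" "\<And>\<omega>. \<omega> \<in> space M \<Longrightarrow> indicator E \<omega> \<le> f \<omega>"
    and "\<And>\<omega>. \<omega> \<in> space M \<Longrightarrow> f \<omega> \<le> B"
  shows "prob E \<le> outer_exp M f"
  unfolding outer_exp_def
proof (rule cInf_greatest)
  have "integrable M (\<lambda>_. B)"
    by simp
  then show "{integral\<^sup>L M h |h. integrable M h \<and> (\<forall>\<omega>\<in>space M. f \<omega> \<le> h \<omega>)} \<noteq> {}"
    using assms(3) by blast
next
  fix s assume "s \<in> {integral\<^sup>L M h |h. integrable M h \<and> (\<forall>\<omega>\<in>space M. f \<omega> \<le> h \<omega>)}"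
  then obtain h where "s = integral\<^sup>L M h" "integrable M h" "\<forall>\<omega>\<in>space M. f \<omega> \<le> h \<omega>"
    by blast
  moreover have "integral\<^sup>L M (indicator E) \<le> integral\<^sup>L M h"
    using calculation assms(1,2) by (intro integral_mono integrable_real_indicator)
      (auto intro: order_trans simp: less_top[symmetric])
  ultimately show "prob E \<le> s"
    using assms(1) by simp
qed

lemma (in prob_space) clipped_tail_integral_small:
  assumes "Y \<in> borel_measurable M" "0 < e"
  obtains K :: real where "(\<integral>\<omega>. min 1 (max 0 (Y \<omega> - K)) \<partial>M) < e"
proof -
  have "((\<lambda>K. \<integral>\<omega>. min 1 (max 0 (Y \<omega> - K)) \<partial>M) \<longlongrightarrow> (\<integral>\<omega>. 0 \<partial>M)) at_top"
  proof (rule integral_dominated_convergence_at_top[where w = "\<lambda>_. 1"])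
    have "\<forall>\<^sub>F K in at_top. min 1 (max 0 (Y \<omega> - K)) = 0" for \<omega>
      by (rule eventually_at_top_linorderI[of "Y \<omega>"]) auto
    then show "AE \<omega> in M. ((\<lambda>K. min 1 (max 0 (Y \<omega> - K))) \<longlongrightarrow> 0) at_top"
      by (intro AE_I2 tendsto_eventually)
  qed (use assms(1) in auto)
  then have "\<forall>\<^sub>F K in at_top. (\<integral>\<omega>. min 1 (max 0 (Y \<omega> - K)) \<partial>M) < e"
    using assms(2) by (intro order_tendstoD) auto
  then show ?thesis
    using that by (auto simp: eventually_at_top_linorder)
qed

text \<open>The clipped norm is a bounded sup-continuous test functional, so weak convergence bounds
  the tails of the approximating paths by a tail of the limit.\<close>
lemma weak_conv_paths_norm_tail:
  fixes Y :: "nat \<Rightarrow> 'a \<Rightarrow> (real \<Rightarrow> real^'p) \<times> (real \<Rightarrow> real^'p)"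
    and L :: "'b \<Rightarrow> (real \<Rightarrow> real^'p) \<times> (real \<Rightarrow> real^'p)"
    and \<Phi> :: "(real \<Rightarrow> real^'p) \<times> (real \<Rightarrow> real^'p) \<Rightarrow> 'v::real_normed_vector"
  assumes "prob_space P" "prob_space N"
    and weak: "weak_conv_paths F A B P Y N L"
    and cont: "\<And>K. sup_cont A B (\<lambda>x. min 1 (max 0 (norm (\<Phi> x) - K)))"
    and "(\<lambda>\<omega>. norm (\<Phi> (L \<omega>))) \<in> borel_measurable N"
    and events: "\<And>m r. {\<omega>\<in>space P. r < norm (\<Phi> (Y m \<omega>))} \<in> sets P"
    and r: "filterlim r at_top F"
  shows "((\<lambda>m. measure P {\<omega>\<in>space P. r m < norm (\<Phi> (Y m \<omega>))}) \<longlongrightarrow> 0) F"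
proof (rule order_tendstoI)
  interpret P: prob_space P by fact
  interpret N: prob_space N by fact
  fix e :: real assume "0 < e"
  then obtain K where K: "(\<integral>\<omega>. min 1 (max 0 (norm (\<Phi> (L \<omega>)) - K)) \<partial>N) < e"
    using N.clipped_tail_integral_small assms(5) by blast
  define g where "g x = min 1 (max 0 (norm (\<Phi> x) - K))" for x
  have "bounded (range g)"
    unfolding bounded_iff g_def by (intro exI[of _ 1]) auto
  then have "((\<lambda>m. outer_exp P (\<lambda>\<omega>. g (Y m \<omega>))) \<longlongrightarrow> (\<integral>\<omega>. g (L \<omega>) \<partial>N)) F"
    using weak cont unfolding weak_conv_paths_def g_def by blast
  then have "\<forall>\<^sub>F m in F. outer_exp P (\<lambda>\<omega>. g (Y m \<omega>)) < e"
    using K unfolding g_def by (intro order_tendstoD) auto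
  moreover have "\<forall>\<^sub>F m in F. K + 1 \<le> r m"
    using r by (simp add: filterlim_at_top)
  ultimately show "\<forall>\<^sub>F m in F. measure P {\<omega>\<in>space P. r m < norm (\<Phi> (Y m \<omega>))} < e"
  proof eventually_elim
    case (elim m)
    have "measure P {\<omega>\<in>space P. r m < norm (\<Phi> (Y m \<omega>))} \<le> outer_exp P (\<lambda>\<omega>. g (Y m \<omega>))"
      using elim(2) by (intro P.prob_le_outer_exp[OF events, where B = 1])
        (auto simp: g_def indicator_def)
    then show ?case
      using elim(1) by linarith
  qed
qed (intro always_eventually allI, meson less_le_trans measure_nonneg)

lemma clipped_norm_dist_le:
  "\<bar>min 1 (max 0 (norm u - K)) - min 1 (max 0 (norm v - K))\<bar> \<le> dist u v"
  using norm_triangle_ineq3[of u v] by (simp add: dist_norm abs_le_iff split: split_min split_max)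

lemma sup_cont_fst_eval:
  assumes "s \<in> A" "\<And>u v. \<bar>h u - h v\<bar> \<le> dist u v"
  shows "sup_cont A B (\<lambda>x. h (fst x s))"
  unfolding sup_cont_def using assms by (meson le_less_trans)

lemma sup_cont_snd_eval:
  assumes "s \<in> B" "\<And>u v. \<bar>h u - h v\<bar> \<le> dist u v"
  shows "sup_cont A B (\<lambda>x. h (snd x s))"
  unfolding sup_cont_def using assms by (meson le_less_trans)

lemma measure_sum_norm_gt_eq_of_distr_eq:
  fixes X :: "nat \<Rightarrow> 'a \<Rightarrow> 'x::topological_space" and Z :: "nat \<Rightarrow> 'b \<Rightarrow> 'x"
    and G :: "'x \<Rightarrow> 'v::{second_countable_topology, real_normed_vector}"
  assumes law: "distr M (PiM {..<n} (\<lambda>_. borel)) (\<lambda>\<omega>. \<lambda>i\<in>{..<n}. X (a + 1 + i) \<omega>)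
      = distr P (PiM {..<n} (\<lambda>_. borel)) (\<lambda>\<omega>. \<lambda>i\<in>{..<n}. Z (a + 1 + i) \<omega>)"
    and [measurable]: "\<And>t. X t \<in> borel_measurable M" "\<And>t. Z t \<in> borel_measurable P"
      "G \<in> borel_measurable borel"
  shows "measure M {\<omega>\<in>space M. r < norm (\<Sum>t=a+1..a+n. G (X t \<omega>))}
       = measure P {\<omega>\<in>space P. r < norm (\<Sum>t=a+1..a+n. G (Z t \<omega>))}"
proof -
  let ?f = "\<lambda>\<omega>. \<lambda>i\<in>{..<n}. X (a + 1 + i) \<omega>" and ?g = "\<lambda>\<omega>. \<lambda>i\<in>{..<n}. Z (a + 1 + i) \<omega>"
  define S where "S = {y\<in>space (PiM {..<n} (\<lambda>_. borel)). r < norm (\<Sum>i<n. G (y i))}"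
  have S: "S \<in> sets (PiM {..<n} (\<lambda>_. borel :: 'x measure))"
    unfolding S_def by measurable
  have f: "?f \<in> measurable M (PiM {..<n} (\<lambda>_. borel))" and g: "?g \<in> measurable P (PiM {..<n} (\<lambda>_. borel))"
    by (auto intro!: measurable_restrict)
  have reindex: "(\<Sum>t=a+1..a+n. h t) = (\<Sum>i<n. h (a + 1 + i))" for h :: "nat \<Rightarrow> 'v"
    by (rule sum.reindex_bij_witness[of _ "\<lambda>i. a + 1 + i" "\<lambda>t. t - (a + 1)"]) auto
  have "?f -` S \<inter> space M = {\<omega>\<in>space M. r < norm (\<Sum>t=a+1..a+n. G (X t \<omega>))}"
    using measurable_space[OF f] unfolding S_def reindex by auto
  moreover have "?g -` S \<inter> space P = {\<omega>\<in>space P. r < norm (\<Sum>t=a+1..a+n. G (Z t \<omega>))}"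
    using measurable_space[OF g] unfolding S_def reindex by auto
  ultimately show ?thesis
    using measure_distr[OF f S] measure_distr[OF g S] law by simp
qed

lemma scaled_norm_gt_iff:
  fixes v :: "'a::real_normed_vector"
  assumes "0 < s"
  shows "r / s < norm ((1 / s) *\<^sub>R v) \<longleftrightarrow> r < norm v"
  using assms by (simp add: divide_less_cancel)

lemma sum_norm_event_vanishes_of_distr_eq:
  fixes X :: "nat \<Rightarrow> nat \<Rightarrow> 'a \<Rightarrow> 'x::topological_space" and Z :: "nat \<Rightarrow> 'b \<Rightarrow> 'x"
    and G :: "'x \<Rightarrow> 'v::{second_countable_topology, real_normed_vector}"
  assumes law: "\<forall>\<^sub>F m in F.
      distr M (PiM {..<n m} (\<lambda>_. borel)) (\<lambda>\<omega>. \<lambda>i\<in>{..<n m}. X m (a m + 1 + i) \<omega>)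
      = distr P (PiM {..<n m} (\<lambda>_. borel)) (\<lambda>\<omega>. \<lambda>i\<in>{..<n m}. Z (a m + 1 + i) \<omega>)"
    and "\<And>m t. X m t \<in> borel_measurable M" "\<And>t. Z t \<in> borel_measurable P"
      "G \<in> borel_measurable borel"
    and tail: "\<And>r. filterlim r at_top F \<Longrightarrow> ((\<lambda>m. measure P {\<omega>\<in>space P.
      r m < norm ((1 / sqrt (real m)) *\<^sub>R (\<Sum>t=a m+1..a m+n m. G (Z t \<omega>)))}) \<longlongrightarrow> 0) F"
    and growth: "filterlim (\<lambda>m. real (n m) / sqrt (real m)) at_top F"
    and "0 < e"
  shows "((\<lambda>m. measure M {\<omega>\<in>space M. e * real (n m) < norm (\<Sum>t=a m+1..a m+n m. G (X m t \<omega>))})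
    \<longlongrightarrow> 0) F"
proof -
  have "filterlim (\<lambda>m. e * real (n m) / sqrt (real m)) at_top F"
    using filterlim_tendsto_pos_mult_at_top[OF tendsto_const \<open>0 < e\<close> growth] by simp
  then have "((\<lambda>m. measure P {\<omega>\<in>space P. e * real (n m) / sqrt (real m)
      < norm ((1 / sqrt (real m)) *\<^sub>R (\<Sum>t=a m+1..a m+n m. G (Z t \<omega>)))}) \<longlongrightarrow> 0) F"
    by (rule tail)
  moreover have "\<forall>\<^sub>F m in F. 0 < real (n m) / sqrt (real m)"
    using growth by (simp add: filterlim_at_top_dense)
  ultimately show ?thesis
  proof (rule Lim_transform_eventually[OF _ eventually_mono[OF eventually_conj[OF law]]])
    fix m
    assume law_m: "distr M (PiM {..<n m} (\<lambda>_. borel)) (\<lambda>\<omega>. \<lambda>i\<in>{..<n m}. X m (a m + 1 + i) \<omega>)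
      = distr P (PiM {..<n m} (\<lambda>_. borel)) (\<lambda>\<omega>. \<lambda>i\<in>{..<n m}. Z (a m + 1 + i) \<omega>) \<and>
      0 < real (n m) / sqrt (real m)"
    then have "0 < sqrt (real m)"
      by (cases "m = 0") auto
    then show "measure P {\<omega>\<in>space P. e * real (n m) / sqrt (real m)
        < norm ((1 / sqrt (real m)) *\<^sub>R (\<Sum>t=a m+1..a m+n m. G (Z t \<omega>)))}
      = measure M {\<omega>\<in>space M. e * real (n m) < norm (\<Sum>t=a m+1..a m+n m. G (X m t \<omega>))}"
      unfolding scaled_norm_gt_iff[OF \<open>0 < sqrt (real m)\<close>]
      using measure_sum_norm_gt_eq_of_distr_eq[OF conjunct1[OF law_m] assms(2-4)] by simp
  qed
qed

lemma (in finite_measure) measure_Un_tendsto_zero: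
  assumes "\<And>m. A m \<in> sets M" "\<And>m. B m \<in> sets M"
    and "((\<lambda>m. measure M (A m)) \<longlongrightarrow> 0) F" "((\<lambda>m. measure M (B m)) \<longlongrightarrow> 0) F"
  shows "((\<lambda>m. measure M (A m \<union> B m)) \<longlongrightarrow> 0) F"
proof (rule tendsto_sandwich[of "\<lambda>_. 0" _ _ "\<lambda>m. measure M (A m) + measure M (B m)"])
  show "((\<lambda>m. measure M (A m) + measure M (B m)) \<longlongrightarrow> 0) F"
    using tendsto_add[OF assms(3,4)] by simp
qed (use assms(1,2) in \<open>auto intro: always_eventually measure_Un_le\<close>)

lemma (in prob_space) prob_tendsto_one_of_exceptional_tendsto_zero:
  assumes "\<And>m. G m \<in> events" "\<And>m. B m \<in> events"
    and "((\<lambda>m. prob (B m)) \<longlongrightarrow> 0) F"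
    and "\<forall>\<^sub>F m in F. space M - B m \<subseteq> G m"
  shows "((\<lambda>m. prob (G m)) \<longlongrightarrow> 1) F"
proof (rule tendsto_sandwich[of "\<lambda>m. 1 - prob (B m)" _ _ "\<lambda>_. 1"])
  show "\<forall>\<^sub>F m in F. 1 - prob (B m) \<le> prob (G m)"
    using assms(4)
  proof eventually_elim
    case (elim m)
    then have "prob (space M - B m) \<le> prob (G m)"
      using assms(1) by (intro finite_measure_mono)
    then show ?case
      using prob_compl[OF assms(2)] by simp
  qed
  show "((\<lambda>m. 1 - prob (B m)) \<longlongrightarrow> 1) F"
    using tendsto_diff[OF tendsto_const assms(3), of 1] by simp
qed auto

section \<open>The detector under the alternative\<close>

locale change_alternative =
  fixes \<theta> :: "(real^'d \<Rightarrow> real) \<Rightarrow> real^'p"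
    and F1 F2 :: "real^'d \<Rightarrow> real"
    and T c :: real
    and FT :: "nat filter" and Tm cm :: "nat \<Rightarrow> nat"
    and M :: "'a measure" and X :: "nat \<Rightarrow> nat \<Rightarrow> 'a \<Rightarrow> real^'d"
    and P :: "'b measure" and Z1 Z2 :: "int \<Rightarrow> 'b \<Rightarrow> real^'d"
    and N :: "'c measure" and L :: "'c \<Rightarrow> (real \<Rightarrow> real^'p) \<times> (real \<Rightarrow> real^'p)"
    and \<Sigma>1 :: "real^'p^'p"
    and est :: "nat \<Rightarrow> (nat \<Rightarrow> real^'d) \<Rightarrow> real^'p^'p"
    and w :: "real \<Rightarrow> real"
  assumes FT_def: "FT = sequentially \<sqinter> principal {m. 0 < m \<and> T * real m \<in> \<nat>}"
    and Tm_def: "Tm = (\<lambda>m. nat \<lfloor>T * real m\<rfloor>)"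
    and cm_def: "cm = (\<lambda>m. nat \<lfloor>real m * c\<rfloor>)"
    and c_range: "1 < c" "c < T + 1"
    and M_prob: "prob_space M"
    and X_meas: "\<And>m t. X m t \<in> borel_measurable M"
    and P_prob: "prob_space P"
    and Z1_meas: "\<And>t. Z1 t \<in> borel_measurable P"
    and Z2_meas: "\<And>t. Z2 t \<in> borel_measurable P"
    and N_prob: "prob_space N"
    and L_meas: "(\<lambda>\<omega>. norm (fst (L \<omega>) c)) \<in> borel_measurable N"
      "(\<lambda>\<omega>. norm (snd (L \<omega>) (T + 1))) \<in> borel_measurable N"
    and theta_ne: "\<theta> F1 \<noteq> \<theta> F2"
    and IF_meas1: "(\<lambda>x. infl_fun x F1 \<theta>) \<in> borel_measurable borel"
    and IF_meas2: "(\<lambda>x. infl_fun x F2 \<theta>) \<in> borel_measurable borel"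
    and theta_hat_meas: "\<And>m i j. (\<lambda>\<omega>. theta_hat \<theta> (\<lambda>t. X m t \<omega>) i j) \<in> borel_measurable M"
    and law1: "\<And>m. 0 < m \<Longrightarrow> T * real m \<in> \<nat> \<Longrightarrow>
        distr M (PiM {..<cm m} (\<lambda>_. borel)) (\<lambda>\<omega>. \<lambda>i\<in>{..<cm m}. X m (i + 1) \<omega>) =
        distr P (PiM {..<cm m} (\<lambda>_. borel)) (\<lambda>\<omega>. \<lambda>i\<in>{..<cm m}. Z1 (int (i + 1)) \<omega>)"
    and law2: "\<And>m. 0 < m \<Longrightarrow> T * real m \<in> \<nat> \<Longrightarrow>
        distr M (PiM {..<m + Tm m - cm m} (\<lambda>_. borel))
          (\<lambda>\<omega>. \<lambda>i\<in>{..<m + Tm m - cm m}. X m (cm m + 1 + i) \<omega>) =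
        distr P (PiM {..<m + Tm m - cm m} (\<lambda>_. borel))
          (\<lambda>\<omega>. \<lambda>i\<in>{..<m + Tm m - cm m}. Z2 (int (cm m + 1 + i)) \<omega>)"
    and weak: "weak_conv_paths FT {0..c} {c..T+1} P
        (\<lambda>m \<omega>. ((\<lambda>s. (1 / sqrt (real m)) *\<^sub>R
                      (\<Sum>t=1..nat \<lfloor>real m * s\<rfloor>. infl_fun (Z1 (int t) \<omega>) F1 \<theta>)),
                 (\<lambda>s. (1 / sqrt (real m)) *\<^sub>R
                      (\<Sum>t=cm m + 1..nat \<lfloor>real m * s\<rfloor>. infl_fun (Z2 (int t) \<omega>) F2 \<theta>))))
        N L"
    and Sigma1_pd: "pos_def_mat \<Sigma>1"
    and rem1: "\<And>\<epsilon>. \<epsilon> > 0 \<Longrightarrow>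
        ((\<lambda>m. measure M {\<omega>\<in>space M. \<exists>i j. 1 \<le> i \<and> i < j \<and> j \<le> cm m \<and>
            real (j - i + 1) *
              norm (theta_hat \<theta> (\<lambda>t. X m t \<omega>) i j - \<theta> F1
                    - (1 / real (j - i + 1)) *\<^sub>R (\<Sum>t=i..j. infl_fun (X m t \<omega>) F1 \<theta>))
            > \<epsilon> * sqrt (real (cm m))}) \<longlongrightarrow> 0) FT"
    and rem2: "\<And>\<epsilon>. \<epsilon> > 0 \<Longrightarrow>
        ((\<lambda>m. measure M {\<omega>\<in>space M. \<exists>i j. cm m + 1 \<le> i \<and> i < j \<and> j \<le> m + Tm m \<and>
            real (j - i + 1) *
              norm (theta_hat \<theta> (\<lambda>t. X m t \<omega>) i j - \<theta> F2
                    - (1 / real (j - i + 1)) *\<^sub>R (\<Sum>t=i..j. infl_fun (X m t \<omega>) F2 \<theta>))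
            > \<epsilon> * sqrt (real (m + Tm m - cm m))}) \<longlongrightarrow> 0) FT"
    and est_meas: "\<And>m. est m \<in> borel_measurable (PiM {1..m} (\<lambda>_. borel))"
    and est_consistent: "\<And>\<epsilon>. \<epsilon> > 0 \<Longrightarrow>
        ((\<lambda>m. measure M {\<omega>\<in>space M.
            norm (est m (\<lambda>t\<in>{1..m}. X m t \<omega>) - \<Sigma>1) > \<epsilon>}) \<longlongrightarrow> 0) FT"
    and w_T_pos: "w T > 0"
begin

text \<open>The block length \<open>n\<close> is a separate argument so that the events agree literally with
  the hypotheses, where \<open>n = j0 - i0 + 1\<close> holds only up to arithmetic.\<close>
definition remainder_event :: "(real^'d \<Rightarrow> real) \<Rightarrow> nat \<Rightarrow> nat \<Rightarrow> nat \<Rightarrow> real \<Rightarrow> nat \<Rightarrow> 'a set"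
  where "remainder_event F0 i0 j0 n e m = {\<omega>\<in>space M. \<exists>i j. i0 \<le> i \<and> i < j \<and> j \<le> j0 \<and>
    real (j - i + 1) * norm (theta_hat \<theta> (\<lambda>t. X m t \<omega>) i j - \<theta> F0
      - (1 / real (j - i + 1)) *\<^sub>R (\<Sum>t=i..j. infl_fun (X m t \<omega>) F0 \<theta>)) > e * sqrt (real n)}"

definition mean_event :: "(real^'d \<Rightarrow> real) \<Rightarrow> nat \<Rightarrow> nat \<Rightarrow> nat \<Rightarrow> real \<Rightarrow> nat \<Rightarrow> 'a set"
  where "mean_event F0 i0 j0 n e m =
    {\<omega>\<in>space M. e * real n < norm (\<Sum>t=i0..j0. infl_fun (X m t \<omega>) F0 \<theta>)}"

definition estimator_event :: "real \<Rightarrow> nat \<Rightarrow> 'a set"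
  where "estimator_event \<eta> m = {\<omega>\<in>space M. norm (est m (\<lambda>t\<in>{1..m}. X m t \<omega>) - \<Sigma>1) > \<eta>}"

definition exceptional_event :: "real \<Rightarrow> real \<Rightarrow> nat \<Rightarrow> 'a set"
  where "exceptional_event e \<eta> m =
    remainder_event F1 1 (cm m) (cm m) e m \<union>
    remainder_event F2 (cm m + 1) (m + Tm m) (m + Tm m - cm m) e m \<union>
    mean_event F1 1 (cm m) (cm m) e m \<union>
    mean_event F2 (cm m + 1) (m + Tm m) (m + Tm m - cm m) e m \<union>
    estimator_event \<eta> m"

definition alarm_event :: "nat \<Rightarrow> 'a set"
  where "alarm_event m = {\<omega>\<in>space M.
    Max ((\<lambda>k. detector \<theta> (\<lambda>t. X m t \<omega>) (est m (\<lambda>t\<in>{1..m}. X m t \<omega>)) m k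
      / w (real k / real m)) ` {1..Tm m}) > 1}"

lemma eventually_sample_sizes:
  "\<forall>\<^sub>F m in FT. 0 < m \<and> real (Tm m) = T * real m \<and> nat \<lfloor>real m * (T + 1)\<rfloor> = m + Tm m \<and>
    m \<le> cm m \<and> cm m < m + Tm m \<and> (T + 1 - c) * real m \<le> real (m + Tm m - cm m)"
  unfolding FT_def eventually_inf_principal
proof (intro always_eventually allI impI)
  fix m :: nat assume "m \<in> {m. 0 < m \<and> T * real m \<in> \<nat>}"
  then obtain n :: nat where m: "0 < m" and n: "T * real m = real n"
    by (auto elim: Nats_cases)
  have Tm: "Tm m = n"
    unfolding Tm_def n by simp
  have "real m * (T + 1) = real (m + n)"
    using n by (simp add: algebra_simps)
  then have "nat \<lfloor>real m * (T + 1)\<rfloor> = m + n"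
    by (metis floor_of_nat nat_int)
  moreover have "m \<le> cm m"
    using c_range unfolding cm_def by (intro le_nat_floor) (simp add: mult_le_cancel_left1)
  moreover have "real (cm m) \<le> real m * c"
    using c_range unfolding cm_def by (intro of_nat_floor) simp
  then have "real (m + Tm m - cm m) = real m + T * real m - real (cm m)"
    using c_range n mult_left_mono[of c "T + 1" "real m"] unfolding Tm
    by (subst of_nat_diff) (auto simp: algebra_simps)
  moreover have "real m * c < real m * (T + 1)"
    using c_range m by simp
  then have "real m * c < real (m + Tm m)"
    using n unfolding Tm by (simp add: algebra_simps)
  ultimately show "0 < m \<and> real (Tm m) = T * real m \<and> nat \<lfloor>real m * (T + 1)\<rfloor> = m + Tm m \<and>
      m \<le> cm m \<and> cm m < m + Tm m \<and> (T + 1 - c) * real m \<le> real (m + Tm m - cm m)"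
    using m n \<open>real (cm m) \<le> real m * c\<close> unfolding Tm by (auto simp: algebra_simps)
qed

lemma filterlim_real_FT: "filterlim real at_top FT"
  using filterlim_mono[OF filterlim_real_sequentially order_refl] unfolding FT_def by simp

lemma filterlim_sqrt_FT: "filterlim (\<lambda>m. sqrt (real m)) at_top FT"
  by (rule filterlim_compose[OF sqrt_at_top filterlim_real_FT])

lemma eventually_FT_admissible:
  assumes "\<And>m. 0 < m \<Longrightarrow> T * real m \<in> \<nat> \<Longrightarrow> Q m"
  shows "\<forall>\<^sub>F m in FT. Q m"
  unfolding FT_def eventually_inf_principal using assms by (intro always_eventually) auto

lemma IF_Z_measurable [measurable]:
  "(\<lambda>\<omega>. infl_fun (Z1 t \<omega>) F1 \<theta>) \<in> borel_measurable P"
  "(\<lambda>\<omega>. infl_fun (Z2 t \<omega>) F2 \<theta>) \<in> borel_measurable P"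
  by (rule measurable_compose[OF Z1_meas IF_meas1] measurable_compose[OF Z2_meas IF_meas2])+

lemma IF_X_measurable [measurable]:
  "(\<lambda>\<omega>. infl_fun (X m t \<omega>) F1 \<theta>) \<in> borel_measurable M"
  "(\<lambda>\<omega>. infl_fun (X m t \<omega>) F2 \<theta>) \<in> borel_measurable M"
  by (rule measurable_compose[OF X_meas IF_meas1] measurable_compose[OF X_meas IF_meas2])+

lemma phase1_sum_tail:
  assumes "filterlim r at_top FT"
  shows "((\<lambda>m. measure P {\<omega>\<in>space P. r m < norm ((1 / sqrt (real m)) *\<^sub>R
    (\<Sum>t=1..cm m. infl_fun (Z1 (int t) \<omega>) F1 \<theta>))}) \<longlongrightarrow> 0) FT"
  unfolding cm_def
proof (rule weak_conv_paths_norm_tail[OF P_prob N_prob weak, where \<Phi> = "\<lambda>x. fst x c",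
      simplified fst_conv])
  show "sup_cont {0..c} {c..T + 1} (\<lambda>x. min 1 (max 0 (norm (fst x c) - K)))" for K
    using c_range by (intro sup_cont_fst_eval clipped_norm_dist_le) auto
qed (use L_meas assms in measurable)

lemma phase2_sum_tail:
  assumes "filterlim r at_top FT"
  shows "((\<lambda>m. measure P {\<omega>\<in>space P. r m < norm ((1 / sqrt (real m)) *\<^sub>R
    (\<Sum>t=cm m+1..m + Tm m. infl_fun (Z2 (int t) \<omega>) F2 \<theta>))}) \<longlongrightarrow> 0) FT"
proof (rule Lim_transform_eventually)
  show "((\<lambda>m. measure P {\<omega>\<in>space P. r m < norm ((1 / sqrt (real m)) *\<^sub>R
      (\<Sum>t=cm m+1..nat \<lfloor>real m * (T + 1)\<rfloor>. infl_fun (Z2 (int t) \<omega>) F2 \<theta>))}) \<longlongrightarrow> 0) FT"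
  proof (rule weak_conv_paths_norm_tail[OF P_prob N_prob weak, where \<Phi> = "\<lambda>x. snd x (T + 1)",
        simplified snd_conv])
    show "sup_cont {0..c} {c..T + 1} (\<lambda>x. min 1 (max 0 (norm (snd x (T + 1)) - K)))" for K
      using c_range by (intro sup_cont_snd_eval clipped_norm_dist_le) auto
  qed (use L_meas assms in measurable)
  show "\<forall>\<^sub>F m in FT. measure P {\<omega>\<in>space P. r m < norm ((1 / sqrt (real m)) *\<^sub>R
      (\<Sum>t=cm m+1..nat \<lfloor>real m * (T + 1)\<rfloor>. infl_fun (Z2 (int t) \<omega>) F2 \<theta>))} =
    measure P {\<omega>\<in>space P. r m < norm ((1 / sqrt (real m)) *\<^sub>R
      (\<Sum>t=cm m+1..m + Tm m. infl_fun (Z2 (int t) \<omega>) F2 \<theta>))}"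
    using eventually_sample_sizes by eventually_elim simp
qed

lemma mean_event1_vanishes:
  assumes "0 < e"
  shows "((\<lambda>m. measure M (mean_event F1 1 (cm m) (cm m) e m)) \<longlongrightarrow> 0) FT"
proof -
  have "\<forall>\<^sub>F m in FT. sqrt (real m) \<le> real (cm m) / sqrt (real m)"
    using eventually_sample_sizes
    by eventually_elim (simp add: le_divide_eq real_sqrt_mult[symmetric])
  then have "filterlim (\<lambda>m. real (cm m) / sqrt (real m)) at_top FT"
    by (rule filterlim_at_top_mono[OF filterlim_sqrt_FT])
  moreover have "\<forall>\<^sub>F m in FT.
      distr M (PiM {..<cm m} (\<lambda>_. borel)) (\<lambda>\<omega>. \<lambda>i\<in>{..<cm m}. X m (0 + 1 + i) \<omega>)
      = distr P (PiM {..<cm m} (\<lambda>_. borel)) (\<lambda>\<omega>. \<lambda>i\<in>{..<cm m}. Z1 (int (0 + 1 + i)) \<omega>)"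
    using law1 by (intro eventually_FT_admissible) (simp add: add.commute)
  moreover have "((\<lambda>m. measure P {\<omega>\<in>space P. r m < norm ((1 / sqrt (real m)) *\<^sub>R
      (\<Sum>t=0+1..0+cm m. infl_fun (Z1 (int t) \<omega>) F1 \<theta>))}) \<longlongrightarrow> 0) FT"
    if "filterlim r at_top FT" for r
    using phase1_sum_tail[OF that] by simp
  ultimately show ?thesis
    using sum_norm_event_vanishes_of_distr_eq[where X = X and Z = "\<lambda>t. Z1 (int t)"
        and G = "\<lambda>x. infl_fun x F1 \<theta>" and a = "\<lambda>_. 0" and n = cm] X_meas Z1_meas IF_meas1 assms
    unfolding mean_event_def by simp
qed

lemma mean_event2_vanishes:
  assumes "0 < e"
  shows "((\<lambda>m. measure M (mean_event F2 (cm m + 1) (m + Tm m) (m + Tm m - cm m) e m)) \<longlongrightarrow> 0) FT"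
proof -
  have "\<forall>\<^sub>F m in FT. (T + 1 - c) * sqrt (real m) \<le> real (m + Tm m - cm m) / sqrt (real m)"
    using eventually_sample_sizes
    by eventually_elim (auto simp: le_divide_eq real_sqrt_mult[symmetric] mult.assoc)
  moreover have "filterlim (\<lambda>m. (T + 1 - c) * sqrt (real m)) at_top FT"
    using c_range by (intro filterlim_tendsto_pos_mult_at_top[OF tendsto_const _ filterlim_sqrt_FT]) simp
  ultimately have "filterlim (\<lambda>m. real (m + Tm m - cm m) / sqrt (real m)) at_top FT"
    by (rule filterlim_at_top_mono[rotated])
  moreover have "\<forall>\<^sub>F m in FT.
      distr M (PiM {..<m + Tm m - cm m} (\<lambda>_. borel))
        (\<lambda>\<omega>. \<lambda>i\<in>{..<m + Tm m - cm m}. X m (cm m + 1 + i) \<omega>)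
      = distr P (PiM {..<m + Tm m - cm m} (\<lambda>_. borel))
        (\<lambda>\<omega>. \<lambda>i\<in>{..<m + Tm m - cm m}. Z2 (int (cm m + 1 + i)) \<omega>)"
    using law2 by (rule eventually_FT_admissible)
  moreover have "((\<lambda>m. measure P {\<omega>\<in>space P. r m < norm ((1 / sqrt (real m)) *\<^sub>R
      (\<Sum>t=cm m+1..cm m + (m + Tm m - cm m). infl_fun (Z2 (int t) \<omega>) F2 \<theta>))}) \<longlongrightarrow> 0) FT"
    if "filterlim r at_top FT" for r
    using phase2_sum_tail[OF that]
    by (rule Lim_transform_eventually, use eventually_sample_sizes in eventually_elim) simp
  ultimately have "((\<lambda>m. measure M {\<omega>\<in>space M. e * real (m + Tm m - cm m)
      < norm (\<Sum>t=cm m+1..cm m + (m + Tm m - cm m). infl_fun (X m t \<omega>) F2 \<theta>)}) \<longlongrightarrow> 0) FT"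
    using sum_norm_event_vanishes_of_distr_eq[where X = X and Z = "\<lambda>t. Z2 (int t)"
        and G = "\<lambda>x. infl_fun x F2 \<theta>" and a = cm and n = "\<lambda>m. m + Tm m - cm m"]
      X_meas Z2_meas IF_meas2 assms by simp
  then show ?thesis
    unfolding mean_event_def
    by (rule Lim_transform_eventually, use eventually_sample_sizes in eventually_elim) simp
qed

lemma theta_hat_close_off_events:
  assumes "\<omega> \<in> space M" "\<omega> \<notin> remainder_event F0 i0 j0 n e m" "\<omega> \<notin> mean_event F0 i0 j0 n e m"
    and "i0 < j0" "n = j0 - i0 + 1" "0 \<le> e"
  shows "norm (theta_hat \<theta> (\<lambda>t. X m t \<omega>) i0 j0 - \<theta> F0) \<le> 2 * e"
proof (rule norm_le_of_remainder_and_sum_bounds)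
  have "\<not> real (j0 - i0 + 1) * norm (theta_hat \<theta> (\<lambda>t. X m t \<omega>) i0 j0 - \<theta> F0
      - (1 / real (j0 - i0 + 1)) *\<^sub>R (\<Sum>t=i0..j0. infl_fun (X m t \<omega>) F0 \<theta>)) > e * sqrt (real n)"
    using assms(1,2,4) unfolding remainder_event_def by blast
  then show "real n * norm (theta_hat \<theta> (\<lambda>t. X m t \<omega>) i0 j0 - \<theta> F0
      - (1 / real n) *\<^sub>R (\<Sum>t=i0..j0. infl_fun (X m t \<omega>) F0 \<theta>)) \<le> e * sqrt (real n)"
    unfolding assms(5) by simp
  show "norm (\<Sum>t=i0..j0. infl_fun (X m t \<omega>) F0 \<theta>) \<le> e * real n"
    using assms(1,3) unfolding mean_event_def by (auto simp: not_less)
qed (use assms in auto)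

lemma alarm_event_if_detector_exceeds:
  assumes "\<omega> \<in> space M" "0 < m" "1 \<le> Tm m" "real (Tm m) = T * real m"
    and "w T < detector \<theta> (\<lambda>t. X m t \<omega>) (est m (\<lambda>t\<in>{1..m}. X m t \<omega>)) m (Tm m)"
  shows "\<omega> \<in> alarm_event m"
proof -
  have "1 < detector \<theta> (\<lambda>t. X m t \<omega>) (est m (\<lambda>t\<in>{1..m}. X m t \<omega>)) m (Tm m) / w (real (Tm m) / real m)"
    using assms(2,4,5) w_T_pos by simp
  also have "\<dots> \<le> Max ((\<lambda>k. detector \<theta> (\<lambda>t. X m t \<omega>) (est m (\<lambda>t\<in>{1..m}. X m t \<omega>)) m k
      / w (real k / real m)) ` {1..Tm m})"
    using assms(3) by (intro Max_ge) auto
  finally show ?thesis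
    unfolding alarm_event_def using assms(1) by simp
qed

lemma eventually_alarm_off_exceptional:
  assumes "0 < e" "4 * e < norm (\<theta> F1 - \<theta> F2)" "0 < \<kappa>"
    and quad: "\<And>E v. norm (E - \<Sigma>1) \<le> \<eta> \<Longrightarrow> \<kappa> * (norm v)\<^sup>2 \<le> v \<bullet> (matrix_inv E *v v)"
  shows "\<forall>\<^sub>F m in FT. space M - exceptional_event e \<eta> m \<subseteq> alarm_event m"
proof -
  define D where "D = norm (\<theta> F1 - \<theta> F2) - 2 * (2 * e)"
  define K where "K = \<kappa> * (T + 1 - c)\<^sup>2 * D\<^sup>2"
  have "0 < K"
    unfolding K_def D_def using assms c_range by simp
  have "\<forall>\<^sub>F m in FT. max 2 (max (2 / (T + 1 - c)) (w T / K)) < real m"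
    using filterlim_real_FT unfolding filterlim_at_top_dense by blast
  then show ?thesis
    using eventually_sample_sizes
  proof eventually_elim
    case (elim m)
    then have "2 \<le> cm m" "2 < (T + 1 - c) * real m" "w T < K * real m"
      using c_range \<open>0 < K\<close> by (auto simp: pos_divide_less_eq mult.commute)
    then have "2 \<le> m + Tm m - cm m"
      using elim by linarith
    show "space M - exceptional_event e \<eta> m \<subseteq> alarm_event m"
    proof
      fix \<omega> assume \<omega>: "\<omega> \<in> space M - exceptional_event e \<eta> m"
      let ?x = "\<lambda>t. X m t \<omega>" and ?E = "est m (\<lambda>t\<in>{1..m}. X m t \<omega>)"
      have "norm (theta_hat \<theta> ?x 1 (cm m) - \<theta> F1) \<le> 2 * e"
        using \<omega> \<open>2 \<le> cm m\<close> \<open>0 < e\<close>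
        by (intro theta_hat_close_off_events) (auto simp: exceptional_event_def)
      moreover have "norm (theta_hat \<theta> ?x (cm m + 1) (m + Tm m) - \<theta> F2) \<le> 2 * e"
        using \<omega> \<open>2 \<le> m + Tm m - cm m\<close> \<open>0 < e\<close>
        by (intro theta_hat_close_off_events[where n = "m + Tm m - cm m"])
          (auto simp: exceptional_event_def)
      moreover have "\<kappa> * (norm v)\<^sup>2 \<le> v \<bullet> (matrix_inv ?E *v v)" for v
        using \<omega> by (intro quad) (auto simp: exceptional_event_def estimator_event_def)
      ultimately have "\<kappa> * (real (cm m))\<^sup>2 * (real (m + Tm m - cm m))\<^sup>2 * D\<^sup>2 / real m ^ 3
          \<le> detector \<theta> ?x ?E m (m + Tm m - m)"
        unfolding D_def using elim assms by (intro detector_lower_bound) auto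
      moreover have "K * real m \<le> \<kappa> * (real (cm m))\<^sup>2 * (real (m + Tm m - cm m))\<^sup>2 * D\<^sup>2 / real m ^ 3"
        unfolding K_def using elim c_range \<open>0 < \<kappa>\<close>
        by (intro square_scaling_le_div_cube) auto
      ultimately have "w T < detector \<theta> ?x ?E m (Tm m)"
        using \<open>w T < K * real m\<close> by simp
      then show "\<omega> \<in> alarm_event m"
        using \<omega> elim \<open>2 \<le> m + Tm m - cm m\<close> by (intro alarm_event_if_detector_exceeds) auto
    qed
  qed
qed

lemma estimator_measurable [measurable]:
  "(\<lambda>\<omega>. est m (\<lambda>t\<in>{1..m}. X m t \<omega>)) \<in> borel_measurable M"
  by (rule measurable_compose[OF measurable_restrict est_meas]) (rule X_meas)

declare theta_hat_meas [measurable]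

lemma event_sets:
  "remainder_event F1 i0 j0 n e m \<in> sets M" "remainder_event F2 i0 j0 n e m \<in> sets M"
  "mean_event F1 i0 j0 n e m \<in> sets M" "mean_event F2 i0 j0 n e m \<in> sets M"
  "estimator_event \<eta> m \<in> sets M"
  unfolding remainder_event_def mean_event_def estimator_event_def by measurable

lemma exceptional_event_sets: "exceptional_event e \<eta> m \<in> sets M"
  unfolding exceptional_event_def by (intro sets.Un event_sets)

lemma detector_measurable:
  "(\<lambda>\<omega>. detector \<theta> (\<lambda>t. X m t \<omega>) (est m (\<lambda>t\<in>{1..m}. X m t \<omega>)) m k) \<in> borel_measurable M"
  unfolding detector_def
  by (intro borel_measurable_times borel_measurable_const borel_measurable_Max
      borel_measurable_quadratic_form_matrix_inv estimator_measurable) measurable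

lemma alarm_event_sets: "alarm_event m \<in> sets M"
proof -
  have "(\<lambda>\<omega>. Max ((\<lambda>k. detector \<theta> (\<lambda>t. X m t \<omega>) (est m (\<lambda>t\<in>{1..m}. X m t \<omega>)) m k
      / w (real k / real m)) ` {1..Tm m})) \<in> borel_measurable M"
    by (intro borel_measurable_Max borel_measurable_divide detector_measurable) auto
  then show ?thesis
    unfolding alarm_event_def by measurable
qed

theorem alarm_prob_tendsto_one: "((\<lambda>m. measure M (alarm_event m)) \<longlongrightarrow> 1) FT"
proof -
  interpret prob_space M
    by (rule M_prob)
  define e where "e = norm (\<theta> F1 - \<theta> F2) / 8"
  have "0 < e" "4 * e < norm (\<theta> F1 - \<theta> F2)"
    unfolding e_def using theta_ne by auto
  obtain \<eta> \<kappa> where "0 < \<eta>" "0 < \<kappa>"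
    and quad: "\<And>E v. norm (E - \<Sigma>1) \<le> \<eta> \<Longrightarrow> \<kappa> * (norm v)\<^sup>2 \<le> v \<bullet> (matrix_inv E *v v)"
    using pos_def_mat_inverse_coercive_near[OF Sigma1_pd] by blast
  have "((\<lambda>m. prob (remainder_event F1 1 (cm m) (cm m) e m)) \<longlongrightarrow> 0) FT"
    "((\<lambda>m. prob (remainder_event F2 (cm m + 1) (m + Tm m) (m + Tm m - cm m) e m)) \<longlongrightarrow> 0) FT"
    "((\<lambda>m. prob (estimator_event \<eta> m)) \<longlongrightarrow> 0) FT"
    unfolding remainder_event_def estimator_event_def
    by (rule rem1 rem2 est_consistent, fact)+
  then have "((\<lambda>m. prob (exceptional_event e \<eta> m)) \<longlongrightarrow> 0) FT"
    unfolding exceptional_event_def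
    by (intro measure_Un_tendsto_zero sets.Un event_sets mean_event1_vanishes mean_event2_vanishes
        \<open>0 < e\<close>)
  then show ?thesis
    using alarm_event_sets exceptional_event_sets
      eventually_alarm_off_exceptional[OF \<open>0 < e\<close> \<open>4 * e < _\<close> \<open>0 < \<kappa>\<close> quad]
    by (intro prob_tendsto_one_of_exceptional_tendsto_zero)
qed

end

theorem theorem3p8:
  fixes \<theta> :: "(real^'d \<Rightarrow> real) \<Rightarrow> real^'p"
    and T c \<alpha> :: real
    and M :: "'a measure" and X :: "nat \<Rightarrow> nat \<Rightarrow> 'a \<Rightarrow> real^'d"
    and P :: "'b measure" and Z1 Z2 :: "int \<Rightarrow> 'b \<Rightarrow> real^'d"
    and N :: "'c measure" and W1 W2 :: "real \<Rightarrow> 'c \<Rightarrow> real^'p"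
    and Q :: "'e measure" and W :: "real \<Rightarrow> 'e \<Rightarrow> real^'p"
    and \<Sigma>1 \<Sigma>2 :: "real^'p^'p"
    and est :: "nat \<Rightarrow> (nat \<Rightarrow> real^'d) \<Rightarrow> real^'p^'p"
    and w :: "real \<Rightarrow> real"
  defines "F1 \<equiv> cdf_of P (Z1 0)"
    and "F2 \<equiv> cdf_of P (Z2 0)"
    and "FT \<equiv> sequentially \<sqinter> principal {m. 0 < m \<and> T * real m \<in> \<nat>}"
    and "Tm \<equiv> (\<lambda>m::nat. nat \<lfloor>T * real m\<rfloor>)"
    and "cm \<equiv> (\<lambda>m::nat. nat \<lfloor>real m * c\<rfloor>)"
  assumes T_pos: "T > 0"
    and alpha: "0 < \<alpha>" "\<alpha> < 1"
    and c_range: "1 < c" "c < T + 1"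
    and M_prob: "prob_space M"
    and X_meas: "\<And>m t. X m t \<in> borel_measurable M"
    and P_prob: "prob_space P"
    and stat1: "strictly_stationary P Z1"
    and stat2: "strictly_stationary P Z2"
    and theta_ne: "\<theta> F1 \<noteq> \<theta> F2"
    and IF_meas1: "(\<lambda>x. infl_fun x F1 \<theta>) \<in> borel_measurable borel"
    and IF_meas2: "(\<lambda>x. infl_fun x F2 \<theta>) \<in> borel_measurable borel"
    and theta_hat_meas: "\<And>m i j. (\<lambda>\<omega>. theta_hat \<theta> (\<lambda>t. X m t \<omega>) i j) \<in> borel_measurable M"
    and law1: "\<And>m. 0 < m \<Longrightarrow> T * real m \<in> \<nat> \<Longrightarrow>
        distr M (PiM {..<cm m} (\<lambda>_. borel)) (\<lambda>\<omega>. \<lambda>i\<in>{..<cm m}. X m (i + 1) \<omega>) =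
        distr P (PiM {..<cm m} (\<lambda>_. borel)) (\<lambda>\<omega>. \<lambda>i\<in>{..<cm m}. Z1 (int (i + 1)) \<omega>)"
    and law2: "\<And>m. 0 < m \<Longrightarrow> T * real m \<in> \<nat> \<Longrightarrow>
        distr M (PiM {..<m + Tm m - cm m} (\<lambda>_. borel))
          (\<lambda>\<omega>. \<lambda>i\<in>{..<m + Tm m - cm m}. X m (cm m + 1 + i) \<omega>) =
        distr P (PiM {..<m + Tm m - cm m} (\<lambda>_. borel))
          (\<lambda>\<omega>. \<lambda>i\<in>{..<m + Tm m - cm m}. Z2 (int (cm m + 1 + i)) \<omega>)"
    and BM1: "std_BM N W1"
    and BM2: "std_BM N W2"
    and weak: "weak_conv_paths FT {0..c} {c..T+1} P
        (\<lambda>m \<omega>. ((\<lambda>s. (1 / sqrt (real m)) *\<^sub>R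
                      (\<Sum>t=1..nat \<lfloor>real m * s\<rfloor>. infl_fun (Z1 (int t) \<omega>) F1 \<theta>)),
                 (\<lambda>s. (1 / sqrt (real m)) *\<^sub>R
                      (\<Sum>t=cm m + 1..nat \<lfloor>real m * s\<rfloor>. infl_fun (Z2 (int t) \<omega>) F2 \<theta>))))
        N (\<lambda>\<omega>. ((\<lambda>s. mat_sqrt \<Sigma>1 *v W1 s \<omega>),
                 (\<lambda>s. mat_sqrt \<Sigma>2 *v (W2 s \<omega> - W2 c \<omega>))))"
    and Sigma1: "((\<lambda>t::int. cov_mat P (\<lambda>\<omega>. infl_fun (Z1 0 \<omega>) F1 \<theta>)
                                   (\<lambda>\<omega>. infl_fun (Z1 t \<omega>) F1 \<theta>)) has_sum \<Sigma>1) UNIV"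
    and Sigma2: "((\<lambda>t::int. cov_mat P (\<lambda>\<omega>. infl_fun (Z2 0 \<omega>) F2 \<theta>)
                                   (\<lambda>\<omega>. infl_fun (Z2 t \<omega>) F2 \<theta>)) has_sum \<Sigma>2) UNIV"
    and Sigma1_pd: "pos_def_mat \<Sigma>1"
    and Sigma2_pd: "pos_def_mat \<Sigma>2"
    and rem1: "\<And>\<epsilon>. \<epsilon> > 0 \<Longrightarrow>
        ((\<lambda>m. measure M {\<omega>\<in>space M. \<exists>i j. 1 \<le> i \<and> i < j \<and> j \<le> cm m \<and>
            real (j - i + 1) *
              norm (theta_hat \<theta> (\<lambda>t. X m t \<omega>) i j - \<theta> F1
                    - (1 / real (j - i + 1)) *\<^sub>R (\<Sum>t=i..j. infl_fun (X m t \<omega>) F1 \<theta>))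
            > \<epsilon> * sqrt (real (cm m))}) \<longlongrightarrow> 0) FT"
    and rem2: "\<And>\<epsilon>. \<epsilon> > 0 \<Longrightarrow>
        ((\<lambda>m. measure M {\<omega>\<in>space M. \<exists>i j. cm m + 1 \<le> i \<and> i < j \<and> j \<le> m + Tm m \<and>
            real (j - i + 1) *
              norm (theta_hat \<theta> (\<lambda>t. X m t \<omega>) i j - \<theta> F2
                    - (1 / real (j - i + 1)) *\<^sub>R (\<Sum>t=i..j. infl_fun (X m t \<omega>) F2 \<theta>))
            > \<epsilon> * sqrt (real (m + Tm m - cm m))}) \<longlongrightarrow> 0) FT"
    and est_meas: "\<And>m. est m \<in> borel_measurable (PiM {1..m} (\<lambda>_. borel))"
    and est_consistent: "\<And>\<epsilon>. \<epsilon> > 0 \<Longrightarrow>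
        ((\<lambda>m. measure M {\<omega>\<in>space M.
            norm (est m (\<lambda>t\<in>{1..m}. X m t \<omega>) - \<Sigma>1) > \<epsilon>}) \<longlongrightarrow> 0) FT"
    and w_pos: "\<And>x. x \<in> {0..T} \<Longrightarrow> w x > 0"
    and w_mono: "mono_on {0..T} w"
    and BM: "std_BM Q W"
    and w_level: "measure Q {\<omega>\<in>space Q.
        (SUP t\<in>{1..T+1}. SUP s\<in>{1..t}.
           ereal ((t *\<^sub>R W s \<omega> - s *\<^sub>R W t \<omega>) \<bullet> (t *\<^sub>R W s \<omega> - s *\<^sub>R W t \<omega>) / w (t - 1))) > 1}
        = \<alpha>"
  shows "((\<lambda>m. measure M {\<omega>\<in>space M.
            Max ((\<lambda>k. detector \<theta> (\<lambda>t. X m t \<omega>) (est m (\<lambda>t\<in>{1..m}. X m t \<omega>)) m k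
                        / w (real k / real m)) ` {1..Tm m}) > 1}) \<longlongrightarrow> 1) FT"
proof -
  have [measurable]: "\<And>t. W1 t \<in> borel_measurable N" "\<And>t. W2 t \<in> borel_measurable N"
    and "prob_space N"
    using BM1 BM2 unfolding std_BM_def by blast+
  have "\<And>t. Z1 t \<in> borel_measurable P" "\<And>t. Z2 t \<in> borel_measurable P"
    using stat1 stat2 unfolding strictly_stationary_def by blast+
  have "w T > 0"
    using w_pos T_pos by simp
  interpret change_alternative \<theta> F1 F2 T c FT Tm cm M X P Z1 Z2 N
      "\<lambda>\<omega>. ((\<lambda>s. mat_sqrt \<Sigma>1 *v W1 s \<omega>), (\<lambda>s. mat_sqrt \<Sigma>2 *v (W2 s \<omega> - W2 c \<omega>)))"
      \<Sigma>1 est w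
  proof (rule change_alternative.intro)
    show "(\<lambda>\<omega>. norm (fst ((\<lambda>s. mat_sqrt \<Sigma>1 *v W1 s \<omega>), (\<lambda>s. mat_sqrt \<Sigma>2 *v (W2 s \<omega> - W2 c \<omega>))) c))
        \<in> borel_measurable N"
      by simp measurable
    show "(\<lambda>\<omega>. norm (snd ((\<lambda>s. mat_sqrt \<Sigma>1 *v W1 s \<omega>), (\<lambda>s. mat_sqrt \<Sigma>2 *v (W2 s \<omega> - W2 c \<omega>))) (T + 1)))
        \<in> borel_measurable N"
      by simp measurable
  qed (fact | simp only: FT_def Tm_def cm_def)+
  show ?thesis
    using alarm_prob_tendsto_one unfolding alarm_event_def .
qed

end
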